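(* Consider a finite set of time periods $\mathcal{T}$ and a finite set of user types $\mathcal{K}=\{1,\dots,K\}$, where type $k$ has aggregate demand $D_k^t\ge 0$ and value of lost load $V_k^t$ in period $t$, with $V_1^t\le\cdots\le V_K^t$. Let $D_a^t=\sum_kD_k^t>0$. For capacity $r\ge0$ and random variables $\Theta^t$ supported in $[0,1]$, let $s^t=\min(D_a^t,r\Theta^t)$, $d_k^t=\frac{D_k^t}{D_a^t}s^t$, $C_s^t(r,\Theta^t)=\sum_k(V_k^t-p)(D_k^t-d_k^t)$. Fix $p$ with $p\le V_1^t$ for all $t$, $c_r>0$, $\xi\ge0$. Let $f^{\mathrm{No}}(r)=\sum_tp\,\mathbb{E}[s^t]-c_rr$ and $f^{\mathrm{Ins}}(r,\pi)=\sum_k\sum_t\pi_k^tD_k^t+\sum_tp\,\mathbb{E}[s^t]-c_rr-\sum_t\mathbb{E}[C_s^t(r,\Theta^t)]$. Let $(r^*,\pi^* )$ be the optimal solution of Problem-Ins: minimize $\sum_k\sum_t\pi_k^tD_k^t$ over $r\ge0,\pi$ subject to $f^{\mathrm{Ins}}(r,\pi)\ge\xi$, $\pi_k^t-\pi_m^t=(V_k^t-V_m^t)\mathbb{E}[1-s^t/D_a^t]$ for all $t,m,k$, and $0\le\pi_k^t\le(V_k^t-p)\mathbb{E}[1-s^t/D_a^t]$ for all $t,k$. Let $r^\ddagger$ be the optimal solution of Problem-NoIns: maximize $r\ge0$ subject to $f^{\mathrm{No}}(r)\ge\xi$. Then the users' total cost under the insurance-providing utility, $\sum_t\sum_k(\pi_k^{t*}+p)D_k^t$,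 is no larger than the users' total cost under the no-insurance utility, $\sum_t\big(p\,\mathbb{E}[s^t(r^\ddagger,\Theta^t)]+\sum_kV_k^t\,\mathbb{E}[D_k^t-d_k^t(r^\ddagger,\Theta^t)]\big)$.
   Context: Expectations are over $\Theta^t$. Under the insurance contract, a user of type $k$ with demand $D_i^t$ who buys the type-$k$ item pays $\sum_t(\pi_k^t+p)D_i^t$ (lost load is fully reimbursed); without insurance, a user pays the electricity bill $p$ on delivered energy $d_i^t=\frac{D_i^t}{D_a^t}s^t$ and incurs lost-load cost $V_i^t(D_i^t-d_i^t)$ in expectation. The problems are assumed feasible with optimal solutions as described. *)

theory Defs
  imports "HOL-Probability.Probability"
begin

definition Dagg :: "nat \<Rightarrow> (nat \<Rightarrow> 't \<Rightarrow> real) \<Rightarrow> 't \<Rightarrow> real" where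
  "Dagg K D t = (\<Sum>k=1..K. D k t)"

definition supplied :: "nat \<Rightarrow> (nat \<Rightarrow> 't \<Rightarrow> real) \<Rightarrow> 't \<Rightarrow> real \<Rightarrow> real \<Rightarrow> real" where
  "supplied K D t r \<theta> = min (Dagg K D t) (r * \<theta>)"

definition delivered :: "nat \<Rightarrow> (nat \<Rightarrow> 't \<Rightarrow> real) \<Rightarrow> nat \<Rightarrow> 't \<Rightarrow> real \<Rightarrow> real \<Rightarrow> real" where
  "delivered K D k t r \<theta> = D k t / Dagg K D t * supplied K D t r \<theta>"

definition Cs :: "nat \<Rightarrow> (nat \<Rightarrow> 't \<Rightarrow> real) \<Rightarrow> (nat \<Rightarrow> 't \<Rightarrow> real) \<Rightarrow> real \<Rightarrow> 't \<Rightarrow> real \<Rightarrow> real \<Rightarrow> real" where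
  "Cs K D V p t r \<theta> = (\<Sum>k=1..K. (V k t - p) * (D k t - delivered K D k t r \<theta>))"

definition f_No :: "'w measure \<Rightarrow> 't set \<Rightarrow> nat \<Rightarrow> (nat \<Rightarrow> 't \<Rightarrow> real) \<Rightarrow> real \<Rightarrow> real
    \<Rightarrow> ('t \<Rightarrow> 'w \<Rightarrow> real) \<Rightarrow> real \<Rightarrow> real" where
  "f_No M T K D p cr \<Theta> r =
     (\<Sum>t\<in>T. p * (\<integral>\<omega>. supplied K D t r (\<Theta> t \<omega>) \<partial>M)) - cr * r"

definition f_Ins :: "'w measure \<Rightarrow> 't set \<Rightarrow> nat \<Rightarrow> (nat \<Rightarrow> 't \<Rightarrow> real) \<Rightarrow> (nat \<Rightarrow> 't \<Rightarrow> real)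
    \<Rightarrow> real \<Rightarrow> real \<Rightarrow> ('t \<Rightarrow> 'w \<Rightarrow> real) \<Rightarrow> real \<Rightarrow> (nat \<Rightarrow> 't \<Rightarrow> real) \<Rightarrow> real" where
  "f_Ins M T K D V p cr \<Theta> r \<pi> =
     (\<Sum>k=1..K. \<Sum>t\<in>T. \<pi> k t * D k t)
     + (\<Sum>t\<in>T. p * (\<integral>\<omega>. supplied K D t r (\<Theta> t \<omega>) \<partial>M)) - cr * r
     - (\<Sum>t\<in>T. (\<integral>\<omega>. Cs K D V p t r (\<Theta> t \<omega>) \<partial>M))"

definition unserved :: "'w measure \<Rightarrow> nat \<Rightarrow> (nat \<Rightarrow> 't \<Rightarrow> real) \<Rightarrow> ('t \<Rightarrow> 'w \<Rightarrow> real)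
    \<Rightarrow> 't \<Rightarrow> real \<Rightarrow> real" where
  "unserved M K D \<Theta> t r = (\<integral>\<omega>. 1 - supplied K D t r (\<Theta> t \<omega>) / Dagg K D t \<partial>M)"

definition Ins_feasible :: "'w measure \<Rightarrow> 't set \<Rightarrow> nat \<Rightarrow> (nat \<Rightarrow> 't \<Rightarrow> real) \<Rightarrow> (nat \<Rightarrow> 't \<Rightarrow> real)
    \<Rightarrow> real \<Rightarrow> real \<Rightarrow> real \<Rightarrow> ('t \<Rightarrow> 'w \<Rightarrow> real) \<Rightarrow> real \<Rightarrow> (nat \<Rightarrow> 't \<Rightarrow> real) \<Rightarrow> bool" where
  "Ins_feasible M T K D V p cr \<xi> \<Theta> r \<pi> \<longleftrightarrow>
     r \<ge> 0 \<and> f_Ins M T K D V p cr \<Theta> r \<pi> \<ge> \<xi>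
     \<and> (\<forall>t\<in>T. \<forall>k\<in>{1..K}. \<forall>m\<in>{1..K}.
          \<pi> k t - \<pi> m t = (V k t - V m t) * unserved M K D \<Theta> t r)
     \<and> (\<forall>t\<in>T. \<forall>k\<in>{1..K}.
          0 \<le> \<pi> k t \<and> \<pi> k t \<le> (V k t - p) * unserved M K D \<Theta> t r)"

definition Ins_optimal :: "'w measure \<Rightarrow> 't set \<Rightarrow> nat \<Rightarrow> (nat \<Rightarrow> 't \<Rightarrow> real) \<Rightarrow> (nat \<Rightarrow> 't \<Rightarrow> real)
    \<Rightarrow> real \<Rightarrow> real \<Rightarrow> real \<Rightarrow> ('t \<Rightarrow> 'w \<Rightarrow> real) \<Rightarrow> real \<Rightarrow> (nat \<Rightarrow> 't \<Rightarrow> real) \<Rightarrow> bool" where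
  "Ins_optimal M T K D V p cr \<xi> \<Theta> r \<pi> \<longleftrightarrow>
     Ins_feasible M T K D V p cr \<xi> \<Theta> r \<pi>
     \<and> (\<forall>r' \<pi>'. Ins_feasible M T K D V p cr \<xi> \<Theta> r' \<pi>' \<longrightarrow>
          (\<Sum>k=1..K. \<Sum>t\<in>T. \<pi> k t * D k t) \<le> (\<Sum>k=1..K. \<Sum>t\<in>T. \<pi>' k t * D k t))"

definition NoIns_optimal :: "'w measure \<Rightarrow> 't set \<Rightarrow> nat \<Rightarrow> (nat \<Rightarrow> 't \<Rightarrow> real)
    \<Rightarrow> real \<Rightarrow> real \<Rightarrow> real \<Rightarrow> ('t \<Rightarrow> 'w \<Rightarrow> real) \<Rightarrow> real \<Rightarrow> bool" where
  "NoIns_optimal M T K D p cr \<xi> \<Theta> r \<longleftrightarrow>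
     r \<ge> 0 \<and> f_No M T K D p cr \<Theta> r \<ge> \<xi>
     \<and> (\<forall>r'. r' \<ge> 0 \<and> f_No M T K D p cr \<Theta> r' \<ge> \<xi> \<longrightarrow> r' \<le> r)"

end

theory Submission
  imports Defs
begin

text \<open>The no-insurance optimum \<open>r\<^sup>\<ddagger>\<close> together with the largest admissible premiums
  \<open>\<pi>\<^sub>k\<^sup>t = (V\<^sub>k\<^sup>t - p) E[1 - s\<^sup>t/D\<^sub>a\<^sup>t]\<close> is feasible for Problem-Ins: these premiums exactly
  refund the expected lost-load compensation, so \<open>f\<^sup>I\<^sup>n\<^sup>s(r\<^sup>\<ddagger>, \<pi>) = f\<^sup>N\<^sup>o(r\<^sup>\<ddagger>)\<close>.
  Optimality of \<open>\<pi>\<^sup>*\<close> bounds the users' cost by their cost under these premiums, which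
  is exactly the users' cost without insurance at capacity \<open>r\<^sup>\<ddagger>\<close>.\<close>

definition max_premium :: "'w measure \<Rightarrow> nat \<Rightarrow> (nat \<Rightarrow> 't \<Rightarrow> real) \<Rightarrow> (nat \<Rightarrow> 't \<Rightarrow> real)
    \<Rightarrow> real \<Rightarrow> ('t \<Rightarrow> 'w \<Rightarrow> real) \<Rightarrow> real \<Rightarrow> nat \<Rightarrow> 't \<Rightarrow> real" where
  "max_premium M K D V p \<Theta> r k t = (V k t - p) * unserved M K D \<Theta> t r"

lemma supplied_le_Dagg: "supplied K D t r \<theta> \<le> Dagg K D t"
  by (simp add: supplied_def)

context prob_space
begin

lemma integrable_supplied:
  assumes "\<Theta> t \<in> borel_measurable M"
    and "\<And>\<omega>. \<omega> \<in> space M \<Longrightarrow> 0 \<le> \<Theta> t \<omega> \<and> \<Theta> t \<omega> \<le> 1"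
    and "r \<ge> 0"
  shows "integrable M (\<lambda>\<omega>. supplied K D t r (\<Theta> t \<omega>))"
proof (rule integrable_const_bound[where B = "\<bar>Dagg K D t\<bar> + r"])
  show "AE \<omega> in M. norm (supplied K D t r (\<Theta> t \<omega>)) \<le> \<bar>Dagg K D t\<bar> + r"
  proof (rule AE_I2)
    fix \<omega> assume "\<omega> \<in> space M"
    then have "0 \<le> r * \<Theta> t \<omega>" "r * \<Theta> t \<omega> \<le> r"
      using assms(2,3) by (auto simp: mult_left_le)
    then show "norm (supplied K D t r (\<Theta> t \<omega>)) \<le> \<bar>Dagg K D t\<bar> + r"
      by (auto simp: supplied_def)
  qed
  show "(\<lambda>\<omega>. supplied K D t r (\<Theta> t \<omega>)) \<in> borel_measurable M"
    unfolding supplied_def using assms(1) by measurable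
qed

lemma unserved_eq:
  assumes "integrable M (\<lambda>\<omega>. supplied K D t r (\<Theta> t \<omega>))"
  shows "unserved M K D \<Theta> t r = 1 - (\<integral>\<omega>. supplied K D t r (\<Theta> t \<omega>) \<partial>M) / Dagg K D t"
  using assms by (simp add: unserved_def prob_space)

lemma unserved_nonneg:
  assumes "integrable M (\<lambda>\<omega>. supplied K D t r (\<Theta> t \<omega>))" and "Dagg K D t > 0"
  shows "unserved M K D \<Theta> t r \<ge> 0"
proof -
  have "(\<integral>\<omega>. supplied K D t r (\<Theta> t \<omega>) \<partial>M) \<le> (\<integral>\<omega>. Dagg K D t \<partial>M)"
    using assms(1) by (rule integral_mono) (simp_all add: supplied_le_Dagg)
  then show ?thesis
    using assms by (simp add: unserved_eq prob_space)
qed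

lemma expected_undelivered:
  assumes "integrable M (\<lambda>\<omega>. supplied K D t r (\<Theta> t \<omega>))"
  shows "(\<integral>\<omega>. D k t - delivered K D k t r (\<Theta> t \<omega>) \<partial>M) = D k t * unserved M K D \<Theta> t r"
  using assms by (simp add: unserved_eq delivered_def prob_space algebra_simps)

lemma expected_Cs:
  assumes "integrable M (\<lambda>\<omega>. supplied K D t r (\<Theta> t \<omega>))"
  shows "(\<integral>\<omega>. Cs K D V p t r (\<Theta> t \<omega>) \<partial>M) = (\<Sum>k=1..K. max_premium M K D V p \<Theta> r k t * D k t)"
proof -
  have "(\<integral>\<omega>. Cs K D V p t r (\<Theta> t \<omega>) \<partial>M)
      = (\<Sum>k=1..K. (V k t - p) * (\<integral>\<omega>. D k t - delivered K D k t r (\<Theta> t \<omega>) \<partial>M))"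
    unfolding Cs_def using assms
    by (subst Bochner_Integration.integral_sum) (auto simp: delivered_def)
  then show ?thesis
    using assms by (simp add: expected_undelivered max_premium_def mult_ac)
qed

lemma f_Ins_max_premium:
  assumes "\<And>t. t \<in> T \<Longrightarrow> integrable M (\<lambda>\<omega>. supplied K D t r (\<Theta> t \<omega>))"
  shows "f_Ins M T K D V p cr \<Theta> r (max_premium M K D V p \<Theta> r) = f_No M T K D p cr \<Theta> r"
proof -
  have "(\<Sum>t\<in>T. \<integral>\<omega>. Cs K D V p t r (\<Theta> t \<omega>) \<partial>M)
      = (\<Sum>t\<in>T. \<Sum>k=1..K. max_premium M K D V p \<Theta> r k t * D k t)"
    using assms by (simp add: expected_Cs)
  also have "\<dots> = (\<Sum>k=1..K. \<Sum>t\<in>T. max_premium M K D V p \<Theta> r k t * D k t)"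
    by (rule sum.swap)
  finally show ?thesis
    by (simp add: f_Ins_def f_No_def)
qed

lemma Ins_feasible_max_premium:
  assumes "r \<ge> 0" and "f_No M T K D p cr \<Theta> r \<ge> \<xi>"
    and integrable: "\<And>t. t \<in> T \<Longrightarrow> integrable M (\<lambda>\<omega>. supplied K D t r (\<Theta> t \<omega>))"
    and "\<And>t. t \<in> T \<Longrightarrow> Dagg K D t > 0"
    and "\<And>k t. k \<in> {1..K} \<Longrightarrow> t \<in> T \<Longrightarrow> p \<le> V k t"
  shows "Ins_feasible M T K D V p cr \<xi> \<Theta> r (max_premium M K D V p \<Theta> r)"
proof -
  have "unserved M K D \<Theta> t r \<ge> 0" if "t \<in> T" for t
    using integrable[OF that] assms(4)[OF that] by (rule unserved_nonneg)
  then show ?thesis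
    using assms by (auto simp: Ins_feasible_def f_Ins_max_premium max_premium_def algebra_simps
        intro: mult_right_mono)
qed

lemma users_cost_max_premium:
  assumes "integrable M (\<lambda>\<omega>. supplied K D t r (\<Theta> t \<omega>))" and "Dagg K D t > 0"
  shows "(\<Sum>k=1..K. (max_premium M K D V p \<Theta> r k t + p) * D k t)
    = p * (\<integral>\<omega>. supplied K D t r (\<Theta> t \<omega>) \<partial>M)
      + (\<Sum>k=1..K. V k t * (\<integral>\<omega>. D k t - delivered K D k t r (\<Theta> t \<omega>) \<partial>M))"
proof -
  let ?u = "unserved M K D \<Theta> t r"
  have "(\<Sum>k=1..K. (max_premium M K D V p \<Theta> r k t + p) * D k t)
      = (\<Sum>k=1..K. V k t * (D k t * ?u)) + p * (1 - ?u) * Dagg K D t"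
    by (simp add: max_premium_def Dagg_def algebra_simps sum.distrib sum_subtractf sum_distrib_left)
  also have "p * (1 - ?u) * Dagg K D t = p * (\<integral>\<omega>. supplied K D t r (\<Theta> t \<omega>) \<partial>M)"
    using assms by (simp add: unserved_eq)
  finally show ?thesis
    using assms(1) by (simp add: expected_undelivered)
qed

end

theorem proposition3:
  fixes M :: "'w measure" and T :: "'t set" and K :: nat
    and D V :: "nat \<Rightarrow> 't \<Rightarrow> real" and p cr \<xi> :: real
    and \<Theta> :: "'t \<Rightarrow> 'w \<Rightarrow> real"
    and rs rd :: real and \<pi>s :: "nat \<Rightarrow> 't \<Rightarrow> real"
  assumes "prob_space M"
    and "finite T"
    and "K \<ge> 1"
    and "\<And>k t. k \<in> {1..K} \<Longrightarrow> t \<in> T \<Longrightarrow> D k t \<ge> 0"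
    and "\<And>t. t \<in> T \<Longrightarrow> Dagg K D t > 0"
    and "\<And>k m t. k \<in> {1..K} \<Longrightarrow> m \<in> {1..K} \<Longrightarrow> k \<le> m \<Longrightarrow> t \<in> T \<Longrightarrow> V k t \<le> V m t"
    and "\<And>t. t \<in> T \<Longrightarrow> \<Theta> t \<in> borel_measurable M"
    and "\<And>t \<omega>. t \<in> T \<Longrightarrow> \<omega> \<in> space M \<Longrightarrow> 0 \<le> \<Theta> t \<omega> \<and> \<Theta> t \<omega> \<le> 1"
    and "\<And>t. t \<in> T \<Longrightarrow> p \<le> V 1 t"
    and "cr > 0"
    and "\<xi> \<ge> 0"
    and "Ins_optimal M T K D V p cr \<xi> \<Theta> rs \<pi>s"
    and "NoIns_optimal M T K D p cr \<xi> \<Theta> rd"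
  shows "(\<Sum>t\<in>T. \<Sum>k=1..K. (\<pi>s k t + p) * D k t)
         \<le> (\<Sum>t\<in>T. p * (\<integral>\<omega>. supplied K D t rd (\<Theta> t \<omega>) \<partial>M)
               + (\<Sum>k=1..K. V k t * (\<integral>\<omega>. D k t - delivered K D k t rd (\<Theta> t \<omega>) \<partial>M)))"
proof -
  interpret prob_space M by fact
  let ?\<pi> = "max_premium M K D V p \<Theta> rd"
  have rd: "rd \<ge> 0" "f_No M T K D p cr \<Theta> rd \<ge> \<xi>"
    using assms(13) by (auto simp: NoIns_optimal_def)
  have integrable: "integrable M (\<lambda>\<omega>. supplied K D t rd (\<Theta> t \<omega>))" if "t \<in> T" for t
    using assms(7,8) rd(1) that by (blast intro: integrable_supplied)
  have "p \<le> V k t" if "k \<in> {1..K}" "t \<in> T" for k t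
    using assms(6)[of 1 k t] assms(9)[of t] that by auto
  then have "Ins_feasible M T K D V p cr \<xi> \<Theta> rd ?\<pi>"
    using rd integrable assms(5) by (blast intro: Ins_feasible_max_premium)
  then have "(\<Sum>k=1..K. \<Sum>t\<in>T. \<pi>s k t * D k t) \<le> (\<Sum>k=1..K. \<Sum>t\<in>T. ?\<pi> k t * D k t)"
    using assms(12) by (auto simp: Ins_optimal_def)
  then have "(\<Sum>t\<in>T. \<Sum>k=1..K. (\<pi>s k t + p) * D k t) \<le> (\<Sum>t\<in>T. \<Sum>k=1..K. (?\<pi> k t + p) * D k t)"
    by (simp add: distrib_right sum.distrib sum.swap[of _ T])
  also have "\<dots> = (\<Sum>t\<in>T. p * (\<integral>\<omega>. supplied K D t rd (\<Theta> t \<omega>) \<partial>M)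
               + (\<Sum>k=1..K. V k t * (\<integral>\<omega>. D k t - delivered K D k t rd (\<Theta> t \<omega>) \<partial>M)))"
    using integrable assms(5) by (intro sum.cong refl users_cost_max_premium)
  finally show ?thesis .
qed

end
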